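(* Let $\Phi \in \mathbb{R}^{m \times n}$, let $S \subseteq [n]$ be such that $\Phi_S$ has full column rank, and let $\overline{S} = [n]\setminus S$. Let $X \in \mathbb{R}^{n \times K}$ ($K \geq 1$) with $\mathrm{supp}(X) = S$, and let $Y = \Phi X$. Let $S_t \subseteq S$ and let $P^{(t)} = \Phi_{S_t}\Phi_{S_t}^{+}$ be the orthogonal projector onto $\mathrm{span}(\Phi_{S_t})$ (with $P^{(t)} = 0$ if $S_t = \emptyset$). Let $R^{(t)} = (I - P^{(t)})Y = (I-P^{(t)})\Phi X$. Let $q_1,\dots,q_K \geq 0$ and $Q = \mathrm{diag}(q_1,\dots,q_K)$. Then $$\|\Phi_S^{\mathrm{T}} R^{(t)} Q\|_{\infty}\, \|\Phi_S^{+}\Phi_{\overline{S}}\|_{1} \;\geq\; \|\Phi_{\overline{S}}^{\mathrm{T}} R^{(t)} Q\|_{\infty}.$$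
   Context: For $S \subseteq [n]=\{1,\dots,n\}$, $\Phi_S$ denotes the submatrix of $\Phi$ consisting of the columns indexed by $S$. $A^{+}$ is the Moore–Penrose pseudoinverse. For a matrix $A$, $\|A\|_{\infty} = \max_i \sum_j |A_{i,j}|$ (the operator norm induced by $\ell_\infty$, i.e. maximal absolute row sum) and $\|A\|_{1} = \max_j \sum_i |A_{i,j}|$ (operator norm induced by $\ell_1$, maximal absolute column sum). For a matrix $X \in \mathbb{R}^{n\times K}$, $\mathrm{supp}(X)$ is the union of the supports of its columns, i.e. the set of row indices $i$ such that $X_{i,k}\neq 0$ for some $k$. *)

theory Defs
  imports "Jordan_Normal_Form.DL_Rank_Submatrix"
begin

(* Columns of A indexed by S (in increasing order); indices are 0-based, [n] = {0..<n} *)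
definition cols_sub :: "'a mat \<Rightarrow> nat set \<Rightarrow> 'a mat" where
  "cols_sub A S = submatrix A UNIV S"

definition full_col_rank :: "real mat \<Rightarrow> bool" where
  "full_col_rank A \<longleftrightarrow> vec_space.rank (dim_row A) A = dim_col A"

definition pinv :: "real mat \<Rightarrow> real mat" where
  "pinv A = (THE B. B \<in> carrier_mat (dim_col A) (dim_row A) \<and>
      A * B * A = A \<and> B * A * B = B \<and>
      transpose_mat (A * B) = A * B \<and> transpose_mat (B * A) = B * A)"

definition norm_inf :: "real mat \<Rightarrow> real" where
  "norm_inf A = Max (insert 0 {(\<Sum>j<dim_col A. \<bar>A $$ (i,j)\<bar>) | i. i < dim_row A})"

definition norm_one :: "real mat \<Rightarrow> real" where
  "norm_one A = Max (insert 0 {(\<Sum>i<dim_row A. \<bar>A $$ (i,j)\<bar>) | j. j < dim_col A})"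

definition msupp :: "real mat \<Rightarrow> nat set" where
  "msupp X = {i. i < dim_row X \<and> (\<exists>k<dim_col X. X $$ (i,k) \<noteq> 0)}"

definition diag_of :: "nat \<Rightarrow> (nat \<Rightarrow> real) \<Rightarrow> real mat" where
  "diag_of K q = mat K K (\<lambda>(i,j). if i = j then q i else 0)"

end

theory Submission
  imports Defs
begin

text \<open>
  Because supp X = S and S_t \<subseteq> S, both \<Phi>X and its projection onto the span of \<Phi>_{S_t}
  lie in the column space of \<Phi>_S, so the residual is R = \<Phi>_S W for some W. As \<Phi>_S is
  injective, \<Phi>_S \<Phi>_S^+ is a symmetric projector fixing that column space, whence
  \<Phi>_Sbar^T R = (\<Phi>_S^+ \<Phi>_Sbar)^T \<Phi>_S^T R. Right multiplication by Q preserves this identity,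
  and the inequality is the submultiplicativity bound ||N^T M||_\<infinity> \<le> ||N||_1 ||M||_\<infinity>.
\<close>

lemma bij_betw_pick:
  assumes "finite T"
  shows "bij_betw (pick T) {..<card T} T"
proof (rule bij_betw_imageI)
  show "inj_on (pick T) {..<card T}"
    by (rule strict_mono_on_imp_inj_on) (auto intro: strict_mono_onI pick_mono)
  show "pick T ` {..<card T} = T"
  proof
    show "pick T ` {..<card T} \<subseteq> T" using pick_in_set by auto
    show "T \<subseteq> pick T ` {..<card T}"
    proof
      fix j assume j: "j \<in> T"
      have "card {a \<in> T. a < j} < card T"
        using j by (intro psubset_card_mono[OF assms]) auto
      then show "j \<in> pick T ` {..<card T}"
        using image_eqI[of j "pick T" "card {a \<in> T. a < j}"] pick_card_in_set[OF j] by simp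
    qed
  qed
qed

lemma card_bounded_subset:
  assumes "T \<subseteq> {0..<n}"
  shows "card {j. j < n \<and> j \<in> T} = card T"
proof -
  have "{j. j < n \<and> j \<in> T} = T" using assms by auto
  then show ?thesis by simp
qed

lemma cols_sub_carrier:
  assumes "A \<in> carrier_mat m n" and "T \<subseteq> {0..<n}"
  shows "cols_sub A T \<in> carrier_mat m (card T)"
  using assms card_bounded_subset[OF assms(2)] by (auto simp: cols_sub_def dim_submatrix)

lemma cols_sub_index:
  assumes "A \<in> carrier_mat m n" and "T \<subseteq> {0..<n}" and "i < m" and "c < card T"
  shows "cols_sub A T $$ (i, c) = A $$ (i, pick T c)"
  using assms submatrix_index[of i A UNIV c T] card_bounded_subset[OF assms(2)]
  by (simp add: cols_sub_def pick_UNIV)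

lemma col_cols_sub:
  assumes "A \<in> carrier_mat m n" and "T \<subseteq> {0..<n}" and "c < card T"
  shows "col (cols_sub A T) c = col A (pick T c)"
  using assms pick_in_set[of c T] cols_sub_carrier[OF assms(1,2)]
  by (intro eq_vecI) (auto simp: cols_sub_index)

lemma cols_sub_mult:
  assumes "A \<in> carrier_mat m n" and "B \<in> carrier_mat n p" and "T \<subseteq> {0..<p}"
  shows "cols_sub (A * B) T = A * cols_sub B T"
proof -
  have AB: "A * B \<in> carrier_mat m p" using assms by simp
  have BT: "cols_sub B T \<in> carrier_mat n (card T)" using cols_sub_carrier[OF assms(2,3)] .
  show ?thesis
  proof (rule eq_matI)
    fix i c assume "i < dim_row (A * cols_sub B T)" and "c < dim_col (A * cols_sub B T)"
    then have i: "i < m" and c: "c < card T" using assms(1) BT by auto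
    have "pick T c < p" using pick_in_set[of c T] c assms(3) by auto
    then show "cols_sub (A * B) T $$ (i, c) = (A * cols_sub B T) $$ (i, c)"
      using i c assms(1,2) AB BT
      by (simp add: cols_sub_index[OF AB assms(3) i c] col_cols_sub[OF assms(2,3) c])
  qed (use assms(1) cols_sub_carrier[OF AB assms(3)] BT in auto)
qed

lemma submatrix_rows_carrier:
  assumes "X \<in> carrier_mat n k" and "T \<subseteq> {0..<n}"
  shows "submatrix X T UNIV \<in> carrier_mat (card T) k"
  using assms card_bounded_subset[OF assms(2)] by (auto simp: dim_submatrix)

lemma mult_eq_cols_sub_mult_submatrix:
  fixes A X :: "'a :: comm_ring_1 mat"
  assumes A: "A \<in> carrier_mat m n" and X: "X \<in> carrier_mat n k" and T: "T \<subseteq> {0..<n}"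
    and zero_rows: "\<And>j c. j < n \<Longrightarrow> j \<notin> T \<Longrightarrow> c < k \<Longrightarrow> X $$ (j, c) = 0"
  shows "A * X = cols_sub A T * submatrix X T UNIV"
proof (rule eq_matI)
  have XT: "submatrix X T UNIV \<in> carrier_mat (card T) k" using submatrix_rows_carrier[OF X T] .
  have AT: "cols_sub A T \<in> carrier_mat m (card T)" using cols_sub_carrier[OF A T] .
  fix i l assume "i < dim_row (cols_sub A T * submatrix X T UNIV)"
    and "l < dim_col (cols_sub A T * submatrix X T UNIV)"
  then have i: "i < m" and l: "l < k" using AT XT by auto
  have fin: "finite T" using T finite_subset by blast
  have "(A * X) $$ (i, l) = (\<Sum>j\<in>{0..<n}. A $$ (i, j) * X $$ (j, l))"
    using A X i l by (simp add: scalar_prod_def)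
  also have "\<dots> = (\<Sum>j\<in>T. A $$ (i, j) * X $$ (j, l))"
    using T zero_rows l by (intro sum.mono_neutral_right) auto
  also have "\<dots> = (\<Sum>c<card T. A $$ (i, pick T c) * X $$ (pick T c, l))"
    using sum.reindex_bij_betw[OF bij_betw_pick[OF fin], of "\<lambda>j. A $$ (i, j) * X $$ (j, l)"] by simp
  also have "\<dots> = (cols_sub A T * submatrix X T UNIV) $$ (i, l)"
    using A X i l AT XT card_bounded_subset[OF T]
    by (auto simp: scalar_prod_def cols_sub_index[OF A T] submatrix_index pick_UNIV lessThan_atLeast0
        intro!: sum.cong)
  finally show "(A * X) $$ (i, l) = (cols_sub A T * submatrix X T UNIV) $$ (i, l)" .
qed (use A X cols_sub_carrier[OF A T] submatrix_rows_carrier[OF X T] in auto)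

lemma cols_sub_one_mat_index:
  assumes "T \<subseteq> {0..<n}" and "j < n" and "c < card T"
  shows "cols_sub (1\<^sub>m n) T $$ (j, c) = (if j = pick T c then 1 else 0)"
  using assms pick_in_set[of c T] by (auto simp: cols_sub_index[of _ n n])

lemma transpose_cols_sub_one_mat_mult:
  assumes T: "T \<subseteq> {0..<n}"
  shows "transpose_mat (cols_sub (1\<^sub>m n) T) * cols_sub (1\<^sub>m n) T = (1\<^sub>m (card T) :: 'a :: comm_ring_1 mat)"
proof -
  have E: "cols_sub (1\<^sub>m n :: 'a mat) T \<in> carrier_mat n (card T)" by (rule cols_sub_carrier[OF one_carrier_mat T])
  show ?thesis
  proof (rule eq_matI)
    have inj: "inj_on (pick T) {..<card T}"
      using bij_betw_pick T finite_subset by (blast dest: bij_betw_imp_inj_on)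
    fix c c' assume "c < dim_row (1\<^sub>m (card T) :: 'a mat)" and "c' < dim_col (1\<^sub>m (card T) :: 'a mat)"
    then have c: "c < card T" and c': "c' < card T" by auto
    have pick_lt: "pick T d < n" if "d < card T" for d
      using that T pick_in_set[of d T] by auto
    have col_E: "col (cols_sub (1\<^sub>m n :: 'a mat) T) d = unit_vec n (pick T d)" if "d < card T" for d
      using that pick_lt by (simp add: col_cols_sub[OF one_carrier_mat T])
    have "(transpose_mat (cols_sub (1\<^sub>m n) T) * cols_sub (1\<^sub>m n :: 'a mat) T) $$ (c, c')
        = unit_vec n (pick T c) \<bullet> (unit_vec n (pick T c') :: 'a vec)"
      using E c c' by (simp add: col_E)
    also have "\<dots> = (if pick T c' = pick T c then 1 else 0)"
      using pick_lt[OF c] pick_lt[OF c'] by simp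
    also have "\<dots> = 1\<^sub>m (card T) $$ (c, c')"
      using c c' inj_onD[OF inj, of c' c] by auto
    finally show "(transpose_mat (cols_sub (1\<^sub>m n) T) * cols_sub (1\<^sub>m n :: 'a mat) T) $$ (c, c')
      = 1\<^sub>m (card T) $$ (c, c')" .
  qed (simp_all add: carrier_matD[OF E])
qed

text \<open>The second factor is the |S| \<times> |T| 0-1 matrix of the inclusion T \<subseteq> S.\<close>

lemma cols_sub_subset_factor:
  fixes A :: "'a :: comm_ring_1 mat"
  assumes A: "A \<in> carrier_mat m n" and TS: "T \<subseteq> S" and S: "S \<subseteq> {0..<n}"
  shows "cols_sub A T = cols_sub A S * submatrix (cols_sub (1\<^sub>m n) T) S UNIV"
proof -
  have T: "T \<subseteq> {0..<n}" using TS S by blast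
  have "cols_sub A T = A * cols_sub (1\<^sub>m n) T"
    using cols_sub_mult[OF A one_carrier_mat T] A by simp
  also have "\<dots> = cols_sub A S * submatrix (cols_sub (1\<^sub>m n) T) S UNIV"
    using TS T pick_in_set[of _ T]
    by (intro mult_eq_cols_sub_mult_submatrix[OF A cols_sub_carrier[OF one_carrier_mat T] S])
      (auto simp: cols_sub_one_mat_index)
  finally show ?thesis .
qed

definition inj_mat :: "'a :: semiring_0 mat \<Rightarrow> bool" where
  "inj_mat A \<longleftrightarrow>
    (\<forall>v \<in> carrier_vec (dim_col A). A *\<^sub>v v = 0\<^sub>v (dim_row A) \<longrightarrow> v = 0\<^sub>v (dim_col A))"

lemma (in vec_space) non_distinct_cols_rank_less:
  assumes "A \<in> carrier_mat n nc" and "\<not> distinct (cols A)"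
  shows "rank A < nc"
proof -
  obtain S where S: "maximal S (\<lambda>T. T \<subseteq> set (cols A) \<and> lin_indpt T)"
    using maximal_exists[of "(\<lambda>T. T \<subseteq> set (cols A) \<and> lin_indpt T)" "card (set (cols A))" "{}"]
    by (meson List.finite_set card_mono empty_iff empty_subsetI finite_lin_indpt2 rev_finite_subset)
  then have "card S \<le> card (set (cols A))" by (simp add: card_mono maximal_def)
  moreover have "card (set (cols A)) < nc"
    using assms card_distinct card_length cols_length carrier_matD(2) nat_less_le by metis
  ultimately show ?thesis using rank_card_indpt[OF assms(1) S] by simp
qed

lemma full_col_rank_imp_inj_mat:
  assumes "full_col_rank A"
  shows "inj_mat A"
  unfolding inj_mat_def
proof (intro ballI impI)
  let ?m = "dim_row A" and ?s = "dim_col A"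
  have A: "A \<in> carrier_mat ?m ?s" by simp
  have rank: "vec_space.rank ?m A = ?s" using assms unfolding full_col_rank_def .
  fix v assume v: "v \<in> carrier_vec ?s" and Av: "A *\<^sub>v v = 0\<^sub>v ?m"
  show "v = 0\<^sub>v ?s"
  proof (rule ccontr)
    assume "v \<noteq> 0\<^sub>v ?s"
    show False
    proof (cases "distinct (cols A)")
      case True
      then show False
        using vec_space.lin_depI[OF A v \<open>v \<noteq> 0\<^sub>v ?s\<close> Av] vec_space.full_rank_lin_indpt[OF A rank] by blast
    next
      case False
      then show False using vec_space.non_distinct_cols_rank_less[OF A] rank by simp
    qed
  qed
qed

lemma inj_mat_cols_sub_subset:
  fixes A :: "'a :: comm_ring_1 mat"
  assumes A: "A \<in> carrier_mat m n" and TS: "T \<subseteq> S" and S: "S \<subseteq> {0..<n}"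
    and inj: "inj_mat (cols_sub A S)"
  shows "inj_mat (cols_sub A T)"
proof -
  have T: "T \<subseteq> {0..<n}" using TS S by blast
  define E where "E = cols_sub (1\<^sub>m n :: 'a mat) T"
  define F where "F = submatrix E S UNIV"
  have E: "E \<in> carrier_mat n (card T)" unfolding E_def by (rule cols_sub_carrier[OF one_carrier_mat T])
  have F: "F \<in> carrier_mat (card S) (card T)" unfolding F_def by (rule submatrix_rows_carrier[OF E S])
  have AS: "cols_sub A S \<in> carrier_mat m (card S)" by (rule cols_sub_carrier[OF A S])
  have ES: "cols_sub (1\<^sub>m n :: 'a mat) S \<in> carrier_mat n (card S)" by (rule cols_sub_carrier[OF one_carrier_mat S])
  show ?thesis
    unfolding inj_mat_def
  proof (intro ballI impI)
    fix v assume "v \<in> carrier_vec (dim_col (cols_sub A T))"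
      and Av: "cols_sub A T *\<^sub>v v = 0\<^sub>v (dim_row (cols_sub A T))"
    then have v: "v \<in> carrier_vec (card T)" and "cols_sub A S *\<^sub>v (F *\<^sub>v v) = 0\<^sub>v m"
      using cols_sub_carrier[OF A T] cols_sub_subset_factor[OF A TS S] AS F
      by (auto simp: F_def E_def assoc_mult_mat_vec)
    then have "F *\<^sub>v v = 0\<^sub>v (card S)" using inj AS F unfolding inj_mat_def by auto
    moreover have "E = cols_sub (1\<^sub>m n) S * F"
      unfolding E_def F_def by (rule cols_sub_subset_factor[OF one_carrier_mat TS S])
    ultimately have "E *\<^sub>v v = cols_sub (1\<^sub>m n) S *\<^sub>v 0\<^sub>v (card S)"
      using assoc_mult_mat_vec[OF ES F v] by simp
    also have "\<dots> = 0\<^sub>v n" using ES by auto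
    finally have "E *\<^sub>v v = 0\<^sub>v n" .
    have "transpose_mat E * E = 1\<^sub>m (card T)"
      unfolding E_def by (rule transpose_cols_sub_one_mat_mult[OF T])
    then have "v = (transpose_mat E * E) *\<^sub>v v" using v by simp
    also have "\<dots> = transpose_mat E *\<^sub>v 0\<^sub>v n"
      using E v \<open>E *\<^sub>v v = 0\<^sub>v n\<close> by (simp add: assoc_mult_mat_vec)
    also have "\<dots> = 0\<^sub>v (card T)" using E by auto
    finally show "v = 0\<^sub>v (dim_col (cols_sub A T))"
      using cols_sub_carrier[OF A T] by simp
  qed
qed

lemma inj_mat_gram_invertible:
  fixes M :: "real mat"
  assumes M: "M \<in> carrier_mat m s" and inj: "inj_mat M"
  obtains C where "C \<in> carrier_mat s s"
    and "transpose_mat M * M * C = 1\<^sub>m s" and "C * (transpose_mat M * M) = 1\<^sub>m s"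
proof -
  let ?G = "transpose_mat M * M"
  have G: "?G \<in> carrier_mat s s" using M by auto
  have "det ?G \<noteq> 0"
  proof
    assume "det ?G = 0"
    then obtain v where v: "v \<in> carrier_vec s" "v \<noteq> 0\<^sub>v s" "?G *\<^sub>v v = 0\<^sub>v s"
      using det_0_iff_vec_prod_zero_field[OF G] by blast
    have Mv: "M *\<^sub>v v \<in> carrier_vec m" using M v by auto
    have "(M *\<^sub>v v) \<bullet> (M *\<^sub>v v) = (?G *\<^sub>v v) \<bullet> v"
      using transpose_vec_mult_scalar[OF M v(1) Mv] assoc_mult_mat_vec[of _ s m M s v] M v by auto
    also have "\<dots> = 0" using v by simp
    finally have "M *\<^sub>v v = 0\<^sub>v m" using conjugate_square_eq_0_vec[OF Mv] by simp
    then show False using inj M v unfolding inj_mat_def by auto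
  qed
  then obtain C where C: "C \<in> carrier_mat s s" "C * ?G = 1\<^sub>m s"
    using det_non_zero_imp_unit[OF G, of "()"] unfolding Units_def ring_mat_def by auto
  then show ?thesis using that mat_mult_left_right_inverse[OF C(1) G C(2)] by blast
qed

lemma pinv_inj_mat:
  assumes M: "M \<in> carrier_mat m s" and inj: "inj_mat M"
  shows "pinv M \<in> carrier_mat s m" and "pinv M * M = 1\<^sub>m s"
    and "transpose_mat (M * pinv M) = M * pinv M"
proof -
  let ?G = "transpose_mat M * M"
  obtain C where C: "C \<in> carrier_mat s s" "?G * C = 1\<^sub>m s" "C * ?G = 1\<^sub>m s"
    using inj_mat_gram_invertible[OF M inj] by blast
  have G: "?G \<in> carrier_mat s s" and MT: "transpose_mat M \<in> carrier_mat s m" using M by auto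
  have C_sym: "transpose_mat C = C"
  proof -
    have GT: "transpose_mat ?G = ?G" using transpose_mult[OF MT M] by simp
    have CTG: "transpose_mat C * ?G = 1\<^sub>m s"
      using transpose_mult[OF G C(1)] C(2) GT by simp
    have "transpose_mat C = transpose_mat C * (?G * C)" using C by simp
    also have "\<dots> = (transpose_mat C * ?G) * C" using C G by (simp add: assoc_mult_mat[of _ s s _ s _ s])
    also have "\<dots> = C" using CTG C by simp
    finally show ?thesis .
  qed
  \<comment> \<open>the candidate (M^T M)^-1 M^T\<close>
  define B where "B = C * transpose_mat M"
  have B: "B \<in> carrier_mat s m" unfolding B_def using C MT by auto
  have BM: "B * M = 1\<^sub>m s"
    unfolding B_def using C M MT by (simp add: assoc_mult_mat[of _ s s _ s _ m])
  have MBM: "M * B * M = M" using BM M B by (simp add: assoc_mult_mat[of _ m s _ m _ s])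
  have MB_sym: "transpose_mat (M * B) = M * B"
  proof -
    have "transpose_mat (M * B) = transpose_mat B * transpose_mat M" using transpose_mult[OF M B] .
    also have "transpose_mat B = M * C" unfolding B_def using transpose_mult[OF C(1) MT] C_sym by simp
    finally show ?thesis unfolding B_def using M C MT by (simp add: assoc_mult_mat[of _ m s _ s _ m])
  qed
  have unique: "B' = B" if B': "B' \<in> carrier_mat s m" "M * B' * M = M" "transpose_mat (M * B') = M * B'" for B'
  proof -
    have "?G * B' = transpose_mat (M * B' * M)"
      using M MT B' transpose_mult[of "M * B'" m m M s] by simp
    then have "?G * B' = transpose_mat M" using B' by simp
    then have "C * (?G * B') = B" unfolding B_def by simp
    moreover have "C * (?G * B') = B'" using C G B' by (simp add: assoc_mult_mat[of C s s ?G s B' m, symmetric])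
    ultimately show ?thesis by simp
  qed
  have "pinv M = B"
    unfolding pinv_def
  proof (rule the_equality)
    show "B \<in> carrier_mat (dim_col M) (dim_row M) \<and> M * B * M = M \<and> B * M * B = B
        \<and> transpose_mat (M * B) = M * B \<and> transpose_mat (B * M) = B * M"
      using M B MBM BM MB_sym by simp
  next
    fix B' assume "B' \<in> carrier_mat (dim_col M) (dim_row M) \<and> M * B' * M = M \<and> B' * M * B' = B'
        \<and> transpose_mat (M * B') = M * B' \<and> transpose_mat (B' * M) = B' * M"
    then show "B' = B" using M by (intro unique) auto
  qed
  then show "pinv M \<in> carrier_mat s m" "pinv M * M = 1\<^sub>m s" "transpose_mat (M * pinv M) = M * pinv M"
    using B BM MB_sym by auto
qed

lemma residual_in_col_range:
  fixes A :: "'a :: comm_ring_1 mat"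
  assumes A: "A \<in> carrier_mat m s" and F: "F \<in> carrier_mat s t" and L: "L \<in> carrier_mat t m"
    and W: "W \<in> carrier_mat s k"
  shows "(1\<^sub>m m - A * F * L) * (A * W) = A * (W - F * (L * (A * W)))"
proof -
  have AW: "A * W \<in> carrier_mat m k" and LAW: "L * (A * W) \<in> carrier_mat t k"
    and AFL: "A * F * L \<in> carrier_mat m m" and FLAW: "F * (L * (A * W)) \<in> carrier_mat s k"
    using A F L W by auto
  have "(1\<^sub>m m - A * F * L) * (A * W) = A * W - A * F * L * (A * W)"
    using left_mult_one_mat[OF AW] minus_mult_distrib_mat[OF one_carrier_mat AFL AW] by simp
  also have "A * F * L * (A * W) = A * (F * (L * (A * W)))"
    using assoc_mult_mat[OF mult_carrier_mat[OF A F] L AW] assoc_mult_mat[OF A F LAW] by simp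
  also have "A * W - \<dots> = A * (W - F * (L * (A * W)))"
    using mult_minus_distrib_mat[OF A W FLAW] by simp
  finally show ?thesis .
qed

lemma transpose_mult_col_range:
  fixes A B W :: "real mat"
  assumes A: "A \<in> carrier_mat m s" and inj: "inj_mat A" and B: "B \<in> carrier_mat m b"
    and W: "W \<in> carrier_mat s k"
  shows "transpose_mat B * (A * W) = transpose_mat (pinv A * B) * (transpose_mat A * (A * W))"
proof -
  have P: "pinv A \<in> carrier_mat s m" and PA: "pinv A * A = 1\<^sub>m s"
    and sym: "transpose_mat (A * pinv A) = A * pinv A"
    using pinv_inj_mat[OF A inj] by auto
  have AW: "A * W \<in> carrier_mat m k" using A W by auto
  have "transpose_mat (A * pinv A) * (A * W) = A * ((pinv A * A) * W)"
    using assoc_mult_mat[OF A P AW] assoc_mult_mat[OF P A W] by (simp add: sym)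
  also have "\<dots> = A * W" using PA W by simp
  finally have fix_AW: "transpose_mat (A * pinv A) * (A * W) = A * W" .
  have "transpose_mat (pinv A * B) * (transpose_mat A * (A * W))
      = transpose_mat B * (transpose_mat (pinv A) * transpose_mat A * (A * W))"
  proof -
    have BT: "transpose_mat B \<in> carrier_mat b m" and PT: "transpose_mat (pinv A) \<in> carrier_mat m s"
      and AT: "transpose_mat A \<in> carrier_mat s m" and ATAW: "transpose_mat A * (A * W) \<in> carrier_mat s k"
      using A B P AW by auto
    show ?thesis
      using assoc_mult_mat[OF BT PT ATAW] assoc_mult_mat[OF PT AT AW] by (simp add: transpose_mult[OF P B])
  qed
  also have "transpose_mat (pinv A) * transpose_mat A = transpose_mat (A * pinv A)"
    using transpose_mult[OF A P] by simp
  finally show ?thesis using fix_AW by simp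
qed

lemma norm_inf_row_le:
  assumes "i < dim_row M"
  shows "(\<Sum>j<dim_col M. \<bar>M $$ (i,j)\<bar>) \<le> norm_inf M"
  unfolding norm_inf_def using assms by (intro Max_ge) auto

lemma norm_one_col_le:
  assumes "j < dim_col M"
  shows "(\<Sum>i<dim_row M. \<bar>M $$ (i,j)\<bar>) \<le> norm_one M"
  unfolding norm_one_def using assms by (intro Max_ge) auto

lemma norm_inf_nonneg: "0 \<le> norm_inf M"
  unfolding norm_inf_def by (intro Max_ge) auto

lemma norm_one_nonneg: "0 \<le> norm_one M"
  unfolding norm_one_def by (intro Max_ge) auto

lemma norm_inf_le:
  assumes "\<And>i. i < dim_row M \<Longrightarrow> (\<Sum>j<dim_col M. \<bar>M $$ (i,j)\<bar>) \<le> c" and "0 \<le> c"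
  shows "norm_inf M \<le> c"
  unfolding norm_inf_def using assms by (subst Max_le_iff) auto

lemma norm_inf_transpose_mult_le:
  assumes N: "N \<in> carrier_mat s b" and M: "M \<in> carrier_mat s k"
  shows "norm_inf (transpose_mat N * M) \<le> norm_one N * norm_inf M"
proof (rule norm_inf_le)
  show "0 \<le> norm_one N * norm_inf M"
    using norm_one_nonneg[of N] norm_inf_nonneg[of M] by simp
next
  fix i assume "i < dim_row (transpose_mat N * M)"
  then have i: "i < b" using N by simp
  have "(\<Sum>l<dim_col (transpose_mat N * M). \<bar>(transpose_mat N * M) $$ (i, l)\<bar>)
      = (\<Sum>l<k. \<bar>\<Sum>j<s. N $$ (j, i) * M $$ (j, l)\<bar>)"
    using N M i by (simp add: scalar_prod_def atLeast0LessThan)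
  also have "\<dots> \<le> (\<Sum>l<k. \<Sum>j<s. \<bar>N $$ (j, i)\<bar> * \<bar>M $$ (j, l)\<bar>)"
    by (intro sum_mono order_trans[OF sum_abs]) (simp add: abs_mult)
  also have "\<dots> = (\<Sum>j<s. \<bar>N $$ (j, i)\<bar> * (\<Sum>l<k. \<bar>M $$ (j, l)\<bar>))"
    by (subst sum.swap) (simp add: sum_distrib_left)
  also have "\<dots> \<le> (\<Sum>j<s. \<bar>N $$ (j, i)\<bar> * norm_inf M)"
    using norm_inf_row_le[of _ M] M by (intro sum_mono mult_left_mono) auto
  also have "\<dots> = (\<Sum>j<s. \<bar>N $$ (j, i)\<bar>) * norm_inf M"
    by (simp add: sum_distrib_right)
  also have "\<dots> \<le> norm_one N * norm_inf M"
    using norm_one_col_le[of i N] N i norm_inf_nonneg[of M] by (intro mult_right_mono) auto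
  finally show "(\<Sum>l<dim_col (transpose_mat N * M). \<bar>(transpose_mat N * M) $$ (i, l)\<bar>)
      \<le> norm_one N * norm_inf M" .
qed

lemma projection_residual_in_col_range:
  fixes \<Phi> X :: "real mat"
  assumes \<Phi>: "\<Phi> \<in> carrier_mat m n" and StS: "St \<subseteq> S" and S: "S \<subseteq> {0..<n}"
    and inj: "inj_mat (cols_sub \<Phi> S)" and X: "X \<in> carrier_mat n K" and supp: "msupp X \<subseteq> S"
  obtains W where "W \<in> carrier_mat (card S) K"
    and "(1\<^sub>m m - cols_sub \<Phi> St * pinv (cols_sub \<Phi> St)) * (\<Phi> * X) = cols_sub \<Phi> S * W"
proof -
  define A where "A = cols_sub \<Phi> S"
  define F where "F = submatrix (cols_sub (1\<^sub>m n :: real mat) St) S UNIV"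
  define L where "L = pinv (cols_sub \<Phi> St)"
  define V where "V = submatrix X S UNIV"
  have St: "St \<subseteq> {0..<n}" using StS S by blast
  have A: "A \<in> carrier_mat m (card S)" unfolding A_def by (rule cols_sub_carrier[OF \<Phi> S])
  have V: "V \<in> carrier_mat (card S) K" unfolding V_def by (rule submatrix_rows_carrier[OF X S])
  have F: "F \<in> carrier_mat (card S) (card St)"
    unfolding F_def by (rule submatrix_rows_carrier[OF cols_sub_carrier[OF one_carrier_mat St] S])
  have L: "L \<in> carrier_mat (card St) m"
    unfolding L_def
    by (rule pinv_inj_mat(1)[OF cols_sub_carrier[OF \<Phi> St] inj_mat_cols_sub_subset[OF \<Phi> StS S inj]])
  have "\<Phi> * X = A * V"
    unfolding A_def V_def using supp X
    by (intro mult_eq_cols_sub_mult_submatrix[OF \<Phi> X S]) (auto simp: msupp_def)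
  moreover have "cols_sub \<Phi> St = A * F" unfolding A_def F_def by (rule cols_sub_subset_factor[OF \<Phi> StS S])
  ultimately have "(1\<^sub>m m - cols_sub \<Phi> St * L) * (\<Phi> * X) = A * (V - F * (L * (A * V)))"
    using residual_in_col_range[OF A F L V] by simp
  moreover have "V - F * (L * (A * V)) \<in> carrier_mat (card S) K" using A F L V by auto
  ultimately show ?thesis using that unfolding A_def L_def by blast
qed

lemma norm_inf_transpose_mult_col_range_le:
  fixes A B W Q :: "real mat"
  assumes A: "A \<in> carrier_mat m s" and inj: "inj_mat A" and B: "B \<in> carrier_mat m b"
    and W: "W \<in> carrier_mat s k" and Q: "Q \<in> carrier_mat k l"
  shows "norm_inf (transpose_mat B * (A * W) * Q)
    \<le> norm_one (pinv A * B) * norm_inf (transpose_mat A * (A * W) * Q)"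
proof -
  have N: "pinv A * B \<in> carrier_mat s b" using pinv_inj_mat(1)[OF A inj] B by auto
  have G: "transpose_mat A * (A * W) \<in> carrier_mat s k" using A W by auto
  have "transpose_mat B * (A * W) * Q = transpose_mat (pinv A * B) * (transpose_mat A * (A * W) * Q)"
    using assoc_mult_mat[OF transpose_carrier_mat[THEN iffD2, OF N] G Q]
    by (simp add: transpose_mult_col_range[OF A inj B W])
  then show ?thesis using norm_inf_transpose_mult_le[OF N mult_carrier_mat[OF G Q]] by simp
qed

theorem lemma1:
  fixes \<Phi> X :: "real mat" and m n K :: nat and S St :: "nat set" and q :: "nat \<Rightarrow> real"
  assumes "\<Phi> \<in> carrier_mat m n"
    and "S \<subseteq> {0..<n}"
    and "full_col_rank (cols_sub \<Phi> S)"
    and "K \<ge> 1"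
    and "X \<in> carrier_mat n K"
    and "msupp X = S"
    and "St \<subseteq> S"
    and "\<And>k. k < K \<Longrightarrow> q k \<ge> 0"
  shows "let Sbar = {0..<n} - S;
             Y = \<Phi> * X;
             P = cols_sub \<Phi> St * pinv (cols_sub \<Phi> St);
             R = (1\<^sub>m m - P) * Y;
             Q = diag_of K q
         in norm_inf (transpose_mat (cols_sub \<Phi> S) * R * Q)
              * norm_one (pinv (cols_sub \<Phi> S) * cols_sub \<Phi> Sbar)
            \<ge> norm_inf (transpose_mat (cols_sub \<Phi> Sbar) * R * Q)"
proof -
  have inj: "inj_mat (cols_sub \<Phi> S)" using full_col_rank_imp_inj_mat[OF assms(3)] .
  obtain W where W: "W \<in> carrier_mat (card S) K"
    and R: "(1\<^sub>m m - cols_sub \<Phi> St * pinv (cols_sub \<Phi> St)) * (\<Phi> * X) = cols_sub \<Phi> S * W"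
    using projection_residual_in_col_range[OF assms(1,7,2) inj assms(5)] assms(6) by blast
  have "norm_inf (transpose_mat (cols_sub \<Phi> ({0..<n} - S)) * (cols_sub \<Phi> S * W) * diag_of K q)
      \<le> norm_one (pinv (cols_sub \<Phi> S) * cols_sub \<Phi> ({0..<n} - S))
        * norm_inf (transpose_mat (cols_sub \<Phi> S) * (cols_sub \<Phi> S * W) * diag_of K q)"
    using cols_sub_carrier[OF assms(1)] assms(2) inj W
    by (intro norm_inf_transpose_mult_col_range_le) (auto simp: diag_of_def)
  then show ?thesis unfolding Let_def R by (simp add: mult.commute)
qed

end
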